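(* Let $\varphi(u,\mathbf{v})$ be a formula of $\{\exists,\forall,\wedge,\vee\}$-FO, where the arity of $\mathbf{v}$ is $k$. Let $\mathcal{B}$ be a finite structure with $\forall_b \exists_{b'}$ as a she. For all $c \in B$ and $\mathbf{x}:=(x_1,\ldots,x_k) \in \{b,b'\}^k$, \[ \mathcal{B} \models \varphi(b,\mathbf{x}) \ \stackrel{(I)}{\Longrightarrow} \ \mathcal{B} \models \varphi(c,\mathbf{x}) \ \stackrel{(II)}{\Longrightarrow} \ \mathcal{B} \models \varphi(b',\mathbf{x}). \]
   Context: $\{\exists,\forall,\wedge,\vee\}$-FO is the positive equality-free fragment of first-order logic. For distinct $b,b'\in B$, the hyper-operation $\forall_b\exists_{b'}:B\to\mathfrak{P}(B)\setminus\{\emptyset\}$ maps $b\mapsto B$ and every $x\neq b$ to $\{b'\}$. A she (surjective hyper-endomorphism) of $\mathcal{B}$ is a surjective hyper-operation $f$ (every element lies in some image) such that whenever $\mathcal{B}\models R(x_1,\ldots,x_i)$ for an extensional relation $R$, also $\mathcal{B}\models R(y_1,\ldots,y_i)$ for all $y_j\in f(x_j)$. *)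

theory Defs
  imports Main
begin

datatype 'r pfo =
    Atom 'r "nat list"
  | Conj "'r pfo" "'r pfo"
  | Disj "'r pfo" "'r pfo"
  | Ex nat "'r pfo"
  | All nat "'r pfo"

fun fv :: "'r pfo \<Rightarrow> nat set" where
  "fv (Atom R xs) = set xs"
| "fv (Conj p q) = fv p \<union> fv q"
| "fv (Disj p q) = fv p \<union> fv q"
| "fv (Ex x p) = fv p - {x}"
| "fv (All x p) = fv p - {x}"

definition is_structure :: "'b set \<Rightarrow> ('r \<Rightarrow> 'b list set) \<Rightarrow> bool" where
  "is_structure B I \<longleftrightarrow> (\<forall>R. I R \<subseteq> lists B)"

fun sat :: "'b set \<Rightarrow> ('r \<Rightarrow> 'b list set) \<Rightarrow> (nat \<Rightarrow> 'b) \<Rightarrow> 'r pfo \<Rightarrow> bool" where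
  "sat B I e (Atom R xs) = (map e xs \<in> I R)"
| "sat B I e (Conj p q) = (sat B I e p \<and> sat B I e q)"
| "sat B I e (Disj p q) = (sat B I e p \<or> sat B I e q)"
| "sat B I e (Ex x p) = (\<exists>a\<in>B. sat B I (e(x := a)) p)"
| "sat B I e (All x p) = (\<forall>a\<in>B. sat B I (e(x := a)) p)"

definition is_she :: "'b set \<Rightarrow> ('r \<Rightarrow> 'b list set) \<Rightarrow> ('b \<Rightarrow> 'b set) \<Rightarrow> bool" where
  "is_she B I f \<longleftrightarrow>
     (\<forall>x\<in>B. f x \<noteq> {} \<and> f x \<subseteq> B) \<and>
     (\<forall>y\<in>B. \<exists>x\<in>B. y \<in> f x) \<and>
     (\<forall>R xs ys. xs \<in> I R \<longrightarrow> list_all2 (\<lambda>y x. y \<in> f x) ys xs \<longrightarrow> ys \<in> I R)"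

text \<open>The hyper-operation forall_b exists_b': b maps to B, every other x to {b'}.\<close>

definition AE_op :: "'b set \<Rightarrow> 'b \<Rightarrow> 'b \<Rightarrow> 'b \<Rightarrow> 'b set" where
  "AE_op B b b' x = (if x = b then B else {b'})"

end

theory Submission
  imports Defs
begin

text \<open>Satisfaction of a positive equality-free formula is preserved when each free variable is
  moved to an element of the she-image of its value: atoms are preserved by definition, an
  existential witness a is replaced by any element of f a (images are nonempty), and a
  universal claim about a' is obtained from a preimage of a' (surjectivity). For the she
  forall_b exists_b', the points b and b' lie in their own images, b is sent to everything and
  everything is sent to b'; this gives the two implications.\<close>

lemma sat_she_image:
  assumes she: "is_she B I f"
    and "sat B I e \<phi>" and "\<forall>x\<in>fv \<phi>. e' x \<in> f (e x)"
  shows "sat B I e' \<phi>"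
  using assms(2,3)
proof (induction \<phi> arbitrary: e e')
  case (Atom R xs)
  have "list_all2 (\<lambda>y x. y \<in> f x) (map e' xs) (map e xs)"
    using Atom.prems(2) by (auto simp: list_all2_conv_all_nth)
  with Atom.prems(1) she show ?case unfolding is_she_def by auto
next
  case (Ex x p)
  then obtain a where a: "a \<in> B" "sat B I (e(x := a)) p" by auto
  with she obtain a' where a': "a' \<in> f a" "a' \<in> B" unfolding is_she_def by blast
  have "sat B I (e'(x := a')) p"
    using Ex.IH[OF a(2)] Ex.prems(2) a'(1) by auto
  with a'(2) show ?case by auto
next
  case (All x p)
  show ?case
  proof (simp, intro ballI)
    fix a' assume "a' \<in> B"
    with she obtain a where a: "a \<in> B" "a' \<in> f a" unfolding is_she_def by blast
    have "sat B I (e(x := a)) p" using All.prems(1) a(1) by auto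
    with All.IH All.prems(2) a(2) show "sat B I (e'(x := a')) p" by auto
  qed
qed auto

lemma sat_fun_upd_she_image:
  assumes "is_she B I f" and "fv \<phi> \<subseteq> insert u V" and "u \<notin> V"
    and "\<forall>v\<in>V. e v \<in> f (e v)" and "a' \<in> f a"
    and "sat B I (e(u := a)) \<phi>"
  shows "sat B I (e(u := a')) \<phi>"
proof (rule sat_she_image[OF assms(1,6)])
  show "\<forall>x\<in>fv \<phi>. (e(u := a')) x \<in> f ((e(u := a)) x)"
    using assms(2-5) by fastforce
qed

lemma AE_op_self:
  assumes "b \<in> B" and "y \<in> {b, b'}"
  shows "y \<in> AE_op B b b' y"
  using assms by (auto simp: AE_op_def)

lemma AE_op_at_b: "AE_op B b b' b = B"
  by (simp add: AE_op_def)

lemma AE_op_contains_b':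
  assumes "b' \<in> B"
  shows "b' \<in> AE_op B b b' c"
  using assms by (simp add: AE_op_def)

theorem lemma3p3:
  fixes B :: "'b set" and I :: "'r \<Rightarrow> 'b list set" and \<phi> :: "'r pfo"
    and b b' c :: 'b and u :: nat and vs :: "nat list" and xs :: "'b list"
    and e :: "nat \<Rightarrow> 'b"
  assumes "finite B" and "is_structure B I"
    and "b \<in> B" and "b' \<in> B" and "b \<noteq> b'"
    and she: "is_she B I (AE_op B b b')"
    and "distinct (u # vs)" and fv: "fv \<phi> \<subseteq> insert u (set vs)"
    and "c \<in> B"
    and "length xs = length vs" and "set xs \<subseteq> {b, b'}"
    and "map e vs = xs"
  shows "(sat B I (e(u := b)) \<phi> \<longrightarrow> sat B I (e(u := c)) \<phi>) \<and>
         (sat B I (e(u := c)) \<phi> \<longrightarrow> sat B I (e(u := b')) \<phi>)"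
proof -
  have u: "u \<notin> set vs" using \<open>distinct (u # vs)\<close> by simp
  have "\<forall>v\<in>set vs. e v \<in> AE_op B b b' (e v)"
  proof
    fix v assume "v \<in> set vs"
    then have "e v \<in> set xs" using \<open>map e vs = xs\<close> by auto
    then have "e v \<in> {b, b'}" using \<open>set xs \<subseteq> {b, b'}\<close> by blast
    then show "e v \<in> AE_op B b b' (e v)" using AE_op_self[OF \<open>b \<in> B\<close>] by blast
  qed
  note upd = sat_fun_upd_she_image[OF she fv u this]
  have "c \<in> AE_op B b b' b" using \<open>c \<in> B\<close> AE_op_at_b by metis
  moreover have "b' \<in> AE_op B b b' c" using AE_op_contains_b'[OF \<open>b' \<in> B\<close>] .
  ultimately show ?thesis using upd by blast
qed

end
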